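(* Let $\mathcal L=(\Sigma,X)$ be a language and $\Lambda$ a fuzzy theory in $\mathcal L$. Let $\mathscr F_\Lambda$ be a left adjoint of $\mathscr U_\Lambda:\mathbf{Mod}(\Lambda)\to\mathbf{Fuz}_H$ with unit $\eta$, let $\nabla(X)=(X,c_\bot)$ (constant membership $\bot$), and let $\iota_{nat}:X\to$ (underlying set of $\mathscr F_\Lambda(\nabla(X))$) be the underlying function of $\eta_{\nabla(X)}$. Then for every formula $\phi$ of $\mathcal L$: $\mathscr F_\Lambda(\nabla(X))\vDash_{\iota_{nat}}\phi$ if and only if $\vdash_\Lambda\phi$.
   Context: $H$ is a frame with bottom $\bot$. An $H$-fuzzy set is a pair $(A,\mu_A)$ of a set $A$ and a function $\mu_A:A\to H$; an arrow $f:(A,\mu_A)\to(B,\mu_B)$ is a function with $\mu_A(x)\le\mu_B(f(x))$; they form $\mathbf{Fuz}_H$. For $n\ge1$, $(A,\mu_A)^n=(A^n,\mu)$ with $\mu(a_1,\dots,a_n)=\bigwedge_i\mu_A(a_i)$. A signature $\Sigma=(O,\mathrm{ar},C)$ consists of a set $O$ of operation symbols with arity $\mathrm{ar}:O\to\{1,2,3,\dots\}$ and a set $C$ of constant symbols. A language is a pair $\mathcal L=(\Sigma,X)$ with $X$ a set of variables. $\mathrm{Terms}(\mathcal L)$ is the smallest set containing $X\sqcup C$ and containing $f(t_1,\dots,t_{\mathrm{ar}(f)})$ whenever $f\in O$ and all $t_i\in\mathrm{Terms}(\mathcal L)$. A formula is either an equation $s\equiv t$ ($s,t$ terms) or a membership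 proposition $\mathsf E_l(t)$ with $l\in H$ and $t$ a term. A sequent $\Gamma\vdash\psi$ is a pair of a (possibly infinite) set $\Gamma$ of formulas and a formula $\psi$; $\vdash\psi$ means $\emptyset\vdash\psi$. A fuzzy theory in $\mathcal L$ is a set of sequents. For $\sigma:X\to\mathrm{Terms}(\mathcal L)$, $t[\sigma]$ is simultaneous substitution, extended to formulas by $(s\equiv t)[\sigma]=(s[\sigma]\equiv t[\sigma])$, $\mathsf E_l(t)[\sigma]=\mathsf E_l(t[\sigma])$, and to sets of formulas elementwise. The rules of the fuzzy sequent calculus are (for all sets of formulas $\Gamma,\Delta,\Phi$, formulas $\phi,\psi$, terms, $l,l'\in H$): (A) $\Gamma\vdash\phi$ if $\phi\in\Gamma$; (Weak) from $\Gamma\vdash\phi$ infer $\Gamma\cup\Delta\vdash\phi$; (Cut) from $\Gamma\vdash\phi$ for all $\phi\in\Phi$ and $\Phi\vdash\psi$ infer $\Gamma\vdash\psi$; (Refl) $\Gamma\vdash s\equiv s$; (Sym) from $\Gamma\vdash s\equiv t$ infer $\Gamma\vdash t\equiv s$; (Trans) from $\Gamma\vdash s\equiv t$ and $\Gamma\vdash t\equiv u$ infer $\Gamma\vdash s\equiv u$; (Sub) from $\Gamma\vdash\psi$ infer $\Gamma[\sigma]\vdash\psi[\sigma]$ for any $\sigma:X\to\mathrm{Terms}(\mathcal L)$; (Cong) for $f\in O$ with $n=\mathrm{ar}(f)$, from $\Gamma\vdash t_i\equiv s_i$ ($i=1,\dots,n$) infer $\Gamma\vdash f(t_1,\dots,t_n)\equiv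 f(s_1,\dots,s_n)$; (Inf) $\Gamma\vdash\mathsf E_\bot(t)$; (Mon) from $\Gamma\vdash\mathsf E_l(t)$ infer $\Gamma\vdash\mathsf E_{l\wedge l'}(t)$; (Exp) for $f\in O$ with $n=\mathrm{ar}(f)$, from $\Gamma\vdash\mathsf E_{l_i}(t_i)$ ($i=1,\dots,n$) infer $\Gamma\vdash\mathsf E_{l_1\wedge\dots\wedge l_n}(f(t_1,\dots,t_n))$; (Sup) for $S\subseteq H$, from $\Gamma\vdash\mathsf E_l(t)$ for all $l\in S$ infer $\Gamma\vdash\mathsf E_{\sup S}(t)$; (Fun) from $\Gamma\vdash t\equiv s$ and $\Gamma\vdash\mathsf E_l(t)$ infer $\Gamma\vdash\mathsf E_l(s)$. The deductive closure $\Lambda^{\vdash}$ of a theory $\Lambda$ is the smallest set of sequents containing $\Lambda$ and closed under all these rules; $\vdash_\Lambda\phi$ means $(\emptyset\vdash\phi)\in\Lambda^{\vdash}$. A $\Sigma$-algebra $\mathcal A=((A,\mu_A),\Sigma^{\mathcal A})$ is an $H$-fuzzy set $(A,\mu_A)$ together with, for each $f\in O$, an arrow $f^{\mathcal A}:(A,\mu_A)^{\mathrm{ar}(f)}\to(A,\mu_A)$ of $\mathbf{Fuz}_H$ and, for each $c\in C$, an element $c^{\mathcal A}\in A$. A morphism of $\Sigma$-algebras is an arrow of $\mathbf{Fuz}_H$ between the carriers preserving all constants and commuting with all operations. An assignment is a function $\iota:X\to A$; evaluation: $x^{\mathcal A,\iota}=\iota(x)$, $c^{\mathcal A,\iota}=c^{\mathcal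 A}$, $f(t_1,\dots,t_n)^{\mathcal A,\iota}=f^{\mathcal A}(t_1^{\mathcal A,\iota},\dots,t_n^{\mathcal A,\iota})$. $\mathcal A\vDash_\iota s\equiv t$ iff $s^{\mathcal A,\iota}=t^{\mathcal A,\iota}$; $\mathcal A\vDash_\iota\mathsf E_l(t)$ iff $l\le\mu_A(t^{\mathcal A,\iota})$. $\mathcal A$ satisfies $\Gamma\vdash\psi$ if for every assignment $\iota$ with $\mathcal A\vDash_\iota\phi$ for all $\phi\in\Gamma$ one has $\mathcal A\vDash_\iota\psi$. $\mathcal A$ is a model of a theory $\Lambda$ if it satisfies every sequent of $\Lambda$. $\mathbf{Mod}(\Lambda)$ is the full subcategory of the category of $\Sigma$-algebras on the models of $\Lambda$, and $\mathscr U_\Lambda:\mathbf{Mod}(\Lambda)\to\mathbf{Fuz}_H$ is the forgetful functor to carriers. *)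

theory Defs
  imports Main
begin

datatype ('o,'c,'x) trm = Var 'x | Cst 'c | App 'o "('o,'c,'x) trm list"

datatype ('o,'c,'x,'h) fml = Eqn "('o,'c,'x) trm" "('o,'c,'x) trm"
                           | Mem 'h "('o,'c,'x) trm"

inductive_set terms :: "'o set \<Rightarrow> ('o \<Rightarrow> nat) \<Rightarrow> 'c set \<Rightarrow> 'x set \<Rightarrow> ('o,'c,'x) trm set"
  for Ops ar Cs X where
  var: "x \<in> X \<Longrightarrow> Var x \<in> terms Ops ar Cs X"
| cst: "c \<in> Cs \<Longrightarrow> Cst c \<in> terms Ops ar Cs X"
| app: "f \<in> Ops \<Longrightarrow> length ts = ar f \<Longrightarrow> (\<forall>t\<in>set ts. t \<in> terms Ops ar Cs X)
        \<Longrightarrow> App f ts \<in> terms Ops ar Cs X"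

definition fmls :: "'o set \<Rightarrow> ('o \<Rightarrow> nat) \<Rightarrow> 'c set \<Rightarrow> 'x set \<Rightarrow> ('o,'c,'x,'h) fml set" where
  "fmls Ops ar Cs X =
     {Eqn s t | s t. s \<in> terms Ops ar Cs X \<and> t \<in> terms Ops ar Cs X}
     \<union> {Mem l t | l t. t \<in> terms Ops ar Cs X}"

definition is_theory :: "'o set \<Rightarrow> ('o \<Rightarrow> nat) \<Rightarrow> 'c set \<Rightarrow> 'x set
     \<Rightarrow> (('o,'c,'x,'h) fml set \<times> ('o,'c,'x,'h) fml) set \<Rightarrow> bool" where
  "is_theory Ops ar Cs X \<Lambda> \<longleftrightarrow>
     (\<forall>(\<Gamma>,\<psi>)\<in>\<Lambda>. \<Gamma> \<subseteq> fmls Ops ar Cs X \<and> \<psi> \<in> fmls Ops ar Cs X)"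

primrec tsubst :: "('x \<Rightarrow> ('o,'c,'x) trm) \<Rightarrow> ('o,'c,'x) trm \<Rightarrow> ('o,'c,'x) trm" where
  "tsubst \<sigma> (Var x) = \<sigma> x"
| "tsubst \<sigma> (Cst c) = Cst c"
| "tsubst \<sigma> (App f ts) = App f (map (tsubst \<sigma>) ts)"

fun fsubst :: "('x \<Rightarrow> ('o,'c,'x) trm) \<Rightarrow> ('o,'c,'x,'h) fml \<Rightarrow> ('o,'c,'x,'h) fml" where
  "fsubst \<sigma> (Eqn s t) = Eqn (tsubst \<sigma> s) (tsubst \<sigma> t)"
| "fsubst \<sigma> (Mem l t) = Mem l (tsubst \<sigma> t)"

inductive_set deriv :: "'o set \<Rightarrow> ('o \<Rightarrow> nat) \<Rightarrow> 'c set \<Rightarrow> 'x set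
    \<Rightarrow> (('o,'c,'x,'h::complete_lattice) fml set \<times> ('o,'c,'x,'h) fml) set
    \<Rightarrow> (('o,'c,'x,'h) fml set \<times> ('o,'c,'x,'h) fml) set"
  for Ops ar Cs X \<Lambda> where
  Ax: "s \<in> \<Lambda> \<Longrightarrow> s \<in> deriv Ops ar Cs X \<Lambda>"
| A: "\<Gamma> \<subseteq> fmls Ops ar Cs X \<Longrightarrow> \<phi> \<in> \<Gamma> \<Longrightarrow> (\<Gamma>, \<phi>) \<in> deriv Ops ar Cs X \<Lambda>"
| Weak: "(\<Gamma>, \<phi>) \<in> deriv Ops ar Cs X \<Lambda> \<Longrightarrow> \<Delta> \<subseteq> fmls Ops ar Cs X
         \<Longrightarrow> (\<Gamma> \<union> \<Delta>, \<phi>) \<in> deriv Ops ar Cs X \<Lambda>"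
| Cut: "\<Gamma> \<subseteq> fmls Ops ar Cs X \<Longrightarrow> (\<forall>\<phi>\<in>\<Phi>. (\<Gamma>, \<phi>) \<in> deriv Ops ar Cs X \<Lambda>)
        \<Longrightarrow> (\<Phi>, \<psi>) \<in> deriv Ops ar Cs X \<Lambda> \<Longrightarrow> (\<Gamma>, \<psi>) \<in> deriv Ops ar Cs X \<Lambda>"
| Refl: "\<Gamma> \<subseteq> fmls Ops ar Cs X \<Longrightarrow> s \<in> terms Ops ar Cs X
         \<Longrightarrow> (\<Gamma>, Eqn s s) \<in> deriv Ops ar Cs X \<Lambda>"
| Sym: "(\<Gamma>, Eqn s t) \<in> deriv Ops ar Cs X \<Lambda> \<Longrightarrow> (\<Gamma>, Eqn t s) \<in> deriv Ops ar Cs X \<Lambda>"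
| Trans: "(\<Gamma>, Eqn s t) \<in> deriv Ops ar Cs X \<Lambda> \<Longrightarrow> (\<Gamma>, Eqn t u) \<in> deriv Ops ar Cs X \<Lambda>
          \<Longrightarrow> (\<Gamma>, Eqn s u) \<in> deriv Ops ar Cs X \<Lambda>"
| Sub: "(\<Gamma>, \<psi>) \<in> deriv Ops ar Cs X \<Lambda> \<Longrightarrow> (\<forall>x\<in>X. \<sigma> x \<in> terms Ops ar Cs X)
        \<Longrightarrow> (fsubst \<sigma> ` \<Gamma>, fsubst \<sigma> \<psi>) \<in> deriv Ops ar Cs X \<Lambda>"
| Cong: "f \<in> Ops \<Longrightarrow> length ts = ar f \<Longrightarrow> length ss = ar f
         \<Longrightarrow> (\<forall>i<ar f. (\<Gamma>, Eqn (ts ! i) (ss ! i)) \<in> deriv Ops ar Cs X \<Lambda>)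
         \<Longrightarrow> (\<Gamma>, Eqn (App f ts) (App f ss)) \<in> deriv Ops ar Cs X \<Lambda>"
| Inf: "\<Gamma> \<subseteq> fmls Ops ar Cs X \<Longrightarrow> t \<in> terms Ops ar Cs X
        \<Longrightarrow> (\<Gamma>, Mem bot t) \<in> deriv Ops ar Cs X \<Lambda>"
| Mon: "(\<Gamma>, Mem l t) \<in> deriv Ops ar Cs X \<Lambda> \<Longrightarrow> (\<Gamma>, Mem (inf l l') t) \<in> deriv Ops ar Cs X \<Lambda>"
| Exp: "f \<in> Ops \<Longrightarrow> length ts = ar f \<Longrightarrow> length ls = ar f
        \<Longrightarrow> (\<forall>i<ar f. (\<Gamma>, Mem (ls ! i) (ts ! i)) \<in> deriv Ops ar Cs X \<Lambda>)
        \<Longrightarrow> (\<Gamma>, Mem (Inf (set ls)) (App f ts)) \<in> deriv Ops ar Cs X \<Lambda>"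
| Sup: "\<Gamma> \<subseteq> fmls Ops ar Cs X \<Longrightarrow> t \<in> terms Ops ar Cs X
        \<Longrightarrow> (\<forall>l\<in>S. (\<Gamma>, Mem l t) \<in> deriv Ops ar Cs X \<Lambda>)
        \<Longrightarrow> (\<Gamma>, Mem (Sup S) t) \<in> deriv Ops ar Cs X \<Lambda>"
| Fun: "(\<Gamma>, Eqn t s) \<in> deriv Ops ar Cs X \<Lambda> \<Longrightarrow> (\<Gamma>, Mem l t) \<in> deriv Ops ar Cs X \<Lambda>
        \<Longrightarrow> (\<Gamma>, Mem l s) \<in> deriv Ops ar Cs X \<Lambda>"

definition provable :: "'o set \<Rightarrow> ('o \<Rightarrow> nat) \<Rightarrow> 'c set \<Rightarrow> 'x set
    \<Rightarrow> (('o,'c,'x,'h::complete_lattice) fml set \<times> ('o,'c,'x,'h) fml) set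
    \<Rightarrow> ('o,'c,'x,'h) fml \<Rightarrow> bool" where
  "provable Ops ar Cs X \<Lambda> \<phi> \<longleftrightarrow> ({}, \<phi>) \<in> deriv Ops ar Cs X \<Lambda>"

definition is_frame :: "'h::complete_lattice itself \<Rightarrow> bool" where
  "is_frame _ \<longleftrightarrow> (\<forall>(a::'h) S. inf a (Sup S) = Sup ((inf a) ` S))"

record ('a,'h,'o,'c) falg =
  carrier :: "'a set"
  mem :: "'a \<Rightarrow> 'h"
  opr :: "'o \<Rightarrow> 'a list \<Rightarrow> 'a"
  cst :: "'c \<Rightarrow> 'a"

text \<open>Each operation is an arrow (A,mu)^n -> (A,mu) of Fuz_H (on the carrier),
  where (A,mu)^n has membership the meet of the memberships (n >= 1).\<close>
definition is_alg :: "'o set \<Rightarrow> ('o \<Rightarrow> nat) \<Rightarrow> 'c set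
    \<Rightarrow> ('a,'h::complete_lattice,'o,'c) falg \<Rightarrow> bool" where
  "is_alg Ops ar Cs A \<longleftrightarrow>
     (\<forall>f\<in>Ops. \<forall>as. length as = ar f \<and> set as \<subseteq> carrier A \<longrightarrow>
         opr A f as \<in> carrier A \<and> Inf (mem A ` set as) \<le> mem A (opr A f as))
   \<and> (\<forall>c\<in>Cs. cst A c \<in> carrier A)"

primrec eval :: "('a,'h,'o,'c) falg \<Rightarrow> ('x \<Rightarrow> 'a) \<Rightarrow> ('o,'c,'x) trm \<Rightarrow> 'a" where
  "eval A \<iota> (Var x) = \<iota> x"
| "eval A \<iota> (Cst c) = cst A c"
| "eval A \<iota> (App f ts) = opr A f (map (eval A \<iota>) ts)"

fun sat :: "('a,'h::complete_lattice,'o,'c) falg \<Rightarrow> ('x \<Rightarrow> 'a) \<Rightarrow> ('o,'c,'x,'h) fml \<Rightarrow> bool" where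
  "sat A \<iota> (Eqn s t) \<longleftrightarrow> eval A \<iota> s = eval A \<iota> t"
| "sat A \<iota> (Mem l t) \<longleftrightarrow> l \<le> mem A (eval A \<iota> t)"

definition sat_seq :: "'x set \<Rightarrow> ('a,'h::complete_lattice,'o,'c) falg
    \<Rightarrow> ('o,'c,'x,'h) fml set \<Rightarrow> ('o,'c,'x,'h) fml \<Rightarrow> bool" where
  "sat_seq X A \<Gamma> \<psi> \<longleftrightarrow>
     (\<forall>\<iota>. \<iota> ` X \<subseteq> carrier A \<longrightarrow> (\<forall>\<phi>\<in>\<Gamma>. sat A \<iota> \<phi>) \<longrightarrow> sat A \<iota> \<psi>)"

definition is_model :: "'o set \<Rightarrow> ('o \<Rightarrow> nat) \<Rightarrow> 'c set \<Rightarrow> 'x set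
    \<Rightarrow> (('o,'c,'x,'h::complete_lattice) fml set \<times> ('o,'c,'x,'h) fml) set
    \<Rightarrow> ('a,'h,'o,'c) falg \<Rightarrow> bool" where
  "is_model Ops ar Cs X \<Lambda> A \<longleftrightarrow>
     is_alg Ops ar Cs A \<and> (\<forall>(\<Gamma>,\<psi>)\<in>\<Lambda>. sat_seq X A \<Gamma> \<psi>)"

definition alg_hom :: "'o set \<Rightarrow> ('o \<Rightarrow> nat) \<Rightarrow> 'c set
    \<Rightarrow> ('a,'h::complete_lattice,'o,'c) falg \<Rightarrow> ('b,'h,'o,'c) falg \<Rightarrow> ('a \<Rightarrow> 'b) \<Rightarrow> bool" where
  "alg_hom Ops ar Cs A B h \<longleftrightarrow>
     (\<forall>a\<in>carrier A. h a \<in> carrier B \<and> mem A a \<le> mem B (h a))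
   \<and> (\<forall>c\<in>Cs. h (cst A c) = cst B c)
   \<and> (\<forall>f\<in>Ops. \<forall>as. length as = ar f \<and> set as \<subseteq> carrier A \<longrightarrow>
         h (opr A f as) = opr B f (map h as))"

text \<open>Fuz_H arrow from nabla(X) = (X, const bot) into the carrier of a model.\<close>
definition nabla_arrow :: "'x set \<Rightarrow> ('b,'h::complete_lattice,'o,'c) falg \<Rightarrow> ('x \<Rightarrow> 'b) \<Rightarrow> bool" where
  "nabla_arrow X B g \<longleftrightarrow> (\<forall>x\<in>X. g x \<in> carrier B \<and> (bot::'h) \<le> mem B (g x))"

text \<open>(F, eta) is a universal arrow from nabla(X) to the forgetful functor U_Lambda,
  i.e. the value at nabla(X) of a left adjoint of U_Lambda together with the component
  of its unit, where the universal property is tested against all models of Lambda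
  whose carrier lives in the type 'b.\<close>
definition universal_arrow :: "'o set \<Rightarrow> ('o \<Rightarrow> nat) \<Rightarrow> 'c set \<Rightarrow> 'x set
    \<Rightarrow> (('o,'c,'x,'h::complete_lattice) fml set \<times> ('o,'c,'x,'h) fml) set
    \<Rightarrow> ('a,'h,'o,'c) falg \<Rightarrow> ('x \<Rightarrow> 'a) \<Rightarrow> 'b itself \<Rightarrow> bool" where
  "universal_arrow Ops ar Cs X \<Lambda> F \<eta> _ \<longleftrightarrow>
     is_model Ops ar Cs X \<Lambda> F \<and> nabla_arrow X F \<eta> \<and>
     (\<forall>(B::('b,'h,'o,'c) falg) g. is_model Ops ar Cs X \<Lambda> B \<and> nabla_arrow X B g \<longrightarrow>
        (\<exists>h. alg_hom Ops ar Cs F B h \<and> (\<forall>x\<in>X. h (\<eta> x) = g x)) \<and>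
        (\<forall>h h'. alg_hom Ops ar Cs F B h \<and> (\<forall>x\<in>X. h (\<eta> x) = g x) \<and>
                alg_hom Ops ar Cs F B h' \<and> (\<forall>x\<in>X. h' (\<eta> x) = g x)
                \<longrightarrow> (\<forall>a\<in>carrier F. h a = h' a)))"

end

theory Submission
  imports Defs
begin

text \<open>Soundness gives one direction. For the other, the provably equal classes of terms form a
  model of \<open>\<Lambda>\<close> (the term model), in which a formula holds at the valuation \<open>x \<mapsto> [x]\<close> exactly when
  it is provable. Universality of \<open>\<eta>\<close> yields a homomorphism from \<open>F\<close> to the term model sending
  \<open>\<eta> x\<close> to \<open>[x]\<close>; homomorphisms preserve equations and memberships, so whatever \<open>F\<close> satisfies
  at \<open>\<eta>\<close> is provable.\<close>

lemma Eqn_in_fmls [simp]: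
  "Eqn s t \<in> fmls Ops ar Cs X \<longleftrightarrow> s \<in> terms Ops ar Cs X \<and> t \<in> terms Ops ar Cs X"
  by (auto simp: fmls_def)

lemma Mem_in_fmls [simp]: "Mem l t \<in> fmls Ops ar Cs X \<longleftrightarrow> t \<in> terms Ops ar Cs X"
  by (auto simp: fmls_def)

lemma tsubst_in_terms:
  "t \<in> terms Ops ar Cs X \<Longrightarrow> \<forall>x\<in>X. \<sigma> x \<in> terms Ops ar Cs X \<Longrightarrow> tsubst \<sigma> t \<in> terms Ops ar Cs X"
  by (induction rule: terms.induct) (auto intro!: terms.intros)

lemma fsubst_in_fmls:
  "\<phi> \<in> fmls Ops ar Cs X \<Longrightarrow> \<forall>x\<in>X. \<sigma> x \<in> terms Ops ar Cs X \<Longrightarrow> fsubst \<sigma> \<phi> \<in> fmls Ops ar Cs X"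
  by (cases \<phi>) (auto intro: tsubst_in_terms)

text \<open>Positive arities matter for \<open>Cong\<close> and \<open>Exp\<close>: only their premises mention \<open>\<Gamma>\<close>.\<close>

lemma deriv_wellformed:
  assumes thy: "is_theory Ops ar Cs X \<Lambda>" and arity: "\<forall>f\<in>Ops. 0 < ar f"
    and "(\<Gamma>, \<phi>) \<in> deriv Ops ar Cs X \<Lambda>"
  shows "\<Gamma> \<subseteq> fmls Ops ar Cs X \<and> \<phi> \<in> fmls Ops ar Cs X"
  using assms(3)
proof (induction rule: deriv.induct[split_format (complete)])
  case (Ax \<Gamma> \<phi>)
  then show ?case using thy unfolding is_theory_def by auto
next
  case (Sub \<Gamma> \<psi> \<sigma>)
  then show ?case using fsubst_in_fmls by blast
next
  case (Cong f ts ss \<Gamma>)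
  then have "0 < ar f" using arity by auto
  then show ?case using Cong by (auto simp: in_set_conv_nth intro!: terms.app)
next
  case (Exp f ts ls \<Gamma>)
  then have "0 < ar f" using arity by auto
  then show ?case using Exp by (auto simp: in_set_conv_nth intro!: terms.app)
qed auto

lemma eval_in_carrier:
  assumes alg: "is_alg Ops ar Cs A" and \<iota>: "\<iota> ` X \<subseteq> carrier A" and t: "t \<in> terms Ops ar Cs X"
  shows "eval A \<iota> t \<in> carrier A"
  using t
proof (induction rule: terms.induct)
  case (app f ts)
  then have "set (map (eval A \<iota>) ts) \<subseteq> carrier A" by auto
  then show ?case using alg app.hyps(1,2) unfolding is_alg_def by simp
qed (use alg \<iota> in \<open>auto simp: is_alg_def\<close>)

lemma eval_tsubst: "eval A \<iota> (tsubst \<sigma> t) = eval A (eval A \<iota> \<circ> \<sigma>) t"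
  by (induction t) (simp_all add: comp_def cong: map_cong)

lemma sat_fsubst: "sat A \<iota> (fsubst \<sigma> \<phi>) = sat A (eval A \<iota> \<circ> \<sigma>) \<phi>"
  by (cases \<phi>) (auto simp: eval_tsubst)

lemma Inf_set_le_pointwise:
  fixes xs ys :: "'a::complete_lattice list"
  assumes "length xs = length ys" and "\<forall>i<length xs. xs ! i \<le> ys ! i"
  shows "Inf (set xs) \<le> Inf (set ys)"
proof (rule Inf_greatest)
  fix y assume "y \<in> set ys"
  then obtain i where "i < length xs" "y = ys ! i" using assms(1) by (auto simp: in_set_conv_nth)
  then show "Inf (set xs) \<le> y" using assms(2) by (metis Inf_lower nth_mem order_trans)
qed

lemma deriv_sound:
  assumes thy: "is_theory Ops ar Cs X \<Lambda>" and arity: "\<forall>f\<in>Ops. 0 < ar f"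
    and model: "is_model Ops ar Cs X \<Lambda> A" and "(\<Gamma>, \<phi>) \<in> deriv Ops ar Cs X \<Lambda>"
  shows "sat_seq X A \<Gamma> \<phi>"
  using assms(4)
proof (induction rule: deriv.induct[split_format (complete)])
  case (Ax \<Gamma> \<phi>)
  then show ?case using model unfolding is_model_def by auto
next
  case (Sub \<Gamma> \<psi> \<sigma>)
  have alg: "is_alg Ops ar Cs A" using model by (simp add: is_model_def)
  show ?case unfolding sat_seq_def
  proof (intro allI impI)
    fix \<iota> assume \<iota>: "\<iota> ` X \<subseteq> carrier A" and "\<forall>\<phi>\<in>fsubst \<sigma> ` \<Gamma>. sat A \<iota> \<phi>"
    then have "\<forall>\<phi>\<in>\<Gamma>. sat A (eval A \<iota> \<circ> \<sigma>) \<phi>" by (simp add: sat_fsubst)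
    moreover have "(eval A \<iota> \<circ> \<sigma>) ` X \<subseteq> carrier A"
      using Sub.hyps(2) eval_in_carrier[OF alg \<iota>] by auto
    ultimately show "sat A \<iota> (fsubst \<sigma> \<psi>)"
      using Sub.IH by (simp add: sat_seq_def sat_fsubst)
  qed
next
  case (Cong f ts ss \<Gamma>)
  then show ?case unfolding sat_seq_def by (auto intro!: arg_cong[where f = "opr A f"] nth_equalityI)
next
  case (Exp f ts ls \<Gamma>)
  have alg: "is_alg Ops ar Cs A" using model by (simp add: is_model_def)
  have ts: "set ts \<subseteq> terms Ops ar Cs X"
    using Exp deriv_wellformed[OF thy arity] by (fastforce simp: in_set_conv_nth)
  show ?case unfolding sat_seq_def
  proof (intro allI impI)
    fix \<iota> assume \<iota>: "\<iota> ` X \<subseteq> carrier A" and \<Gamma>: "\<forall>\<phi>\<in>\<Gamma>. sat A \<iota> \<phi>"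
    let ?as = "map (eval A \<iota>) ts"
    have as: "length ?as = ar f \<and> set ?as \<subseteq> carrier A"
      using Exp.hyps(2) ts eval_in_carrier[OF alg \<iota>] by auto
    have "\<forall>i<ar f. ls ! i \<le> mem A (?as ! i)"
      using Exp.IH Exp.hyps(2) \<iota> \<Gamma> by (auto simp: sat_seq_def)
    then have "Inf (set ls) \<le> Inf (set (map (mem A) ?as))"
      using Exp.hyps(2,3) by (intro Inf_set_le_pointwise) auto
    also have "\<dots> = Inf (mem A ` set ?as)" by (simp only: set_map)
    also have "\<dots> \<le> mem A (opr A f ?as)" using alg Exp.hyps(1) as unfolding is_alg_def by blast
    finally show "sat A \<iota> (Mem (Inf (set ls)) (App f ts))" by simp
  qed
next
  case (Sup \<Gamma> t S)
  then show ?case unfolding sat_seq_def by (auto intro: Sup_least)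
next
  case (Mon \<Gamma> l t l')
  then show ?case unfolding sat_seq_def by (auto intro: le_infI1)
qed (auto simp: sat_seq_def)

lemma alg_hom_eval:
  assumes hom: "alg_hom Ops ar Cs A B h" and alg: "is_alg Ops ar Cs A"
    and \<iota>: "\<iota> ` X \<subseteq> carrier A" and g: "\<forall>x\<in>X. h (\<iota> x) = g x" and t: "t \<in> terms Ops ar Cs X"
  shows "h (eval A \<iota> t) = eval B g t"
  using t
proof (induction rule: terms.induct)
  case (app f ts)
  have "set (map (eval A \<iota>) ts) \<subseteq> carrier A" using app.IH eval_in_carrier[OF alg \<iota>] by auto
  then have "h (eval A \<iota> (App f ts)) = opr B f (map h (map (eval A \<iota>) ts))"
    using hom app.hyps(1,2) unfolding alg_hom_def by simp
  also have "map h (map (eval A \<iota>) ts) = map (eval B g) ts" using app.IH by auto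
  finally show ?case by simp
qed (use hom g in \<open>auto simp: alg_hom_def\<close>)

lemma alg_hom_preserves_sat:
  assumes hom: "alg_hom Ops ar Cs A B h" and alg: "is_alg Ops ar Cs A"
    and \<iota>: "\<iota> ` X \<subseteq> carrier A" and g: "\<forall>x\<in>X. h (\<iota> x) = g x"
    and \<phi>: "\<phi> \<in> fmls Ops ar Cs X" and sat: "sat A \<iota> \<phi>"
  shows "sat B g \<phi>"
proof (cases \<phi>)
  case (Eqn s t)
  then show ?thesis using sat \<phi> alg_hom_eval[OF hom alg \<iota> g] by (metis Eqn_in_fmls sat.simps(1))
next
  case (Mem l t)
  then have t: "t \<in> terms Ops ar Cs X" using \<phi> by simp
  have "l \<le> mem A (eval A \<iota> t)" using sat Mem by simp
  also have "\<dots> \<le> mem B (h (eval A \<iota> t))"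
    using hom eval_in_carrier[OF alg \<iota> t] unfolding alg_hom_def by blast
  finally show ?thesis using Mem alg_hom_eval[OF hom alg \<iota> g t] by simp
qed

context
  fixes Ops :: "'o set" and ar :: "'o \<Rightarrow> nat" and Cs :: "'c set" and X :: "'x set"
    and \<Lambda> :: "(('o,'c,'x,'h::complete_lattice) fml set \<times> ('o,'c,'x,'h) fml) set"
  assumes thy: "is_theory Ops ar Cs X \<Lambda>" and arity: "\<forall>f\<in>Ops. 0 < ar f"
begin

abbreviation prv :: "('o,'c,'x,'h) fml \<Rightarrow> bool" where
  "prv \<phi> \<equiv> provable Ops ar Cs X \<Lambda> \<phi>"

definition prv_class :: "('o,'c,'x) trm \<Rightarrow> ('o,'c,'x) trm set" where
  "prv_class t = {s. prv (Eqn t s)}"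

definition class_rep :: "('o,'c,'x) trm set \<Rightarrow> ('o,'c,'x) trm" where
  "class_rep A = (SOME t. t \<in> A)"

text \<open>The membership degree of a class is the supremum of the provable degrees of its members;
  by \<open>Sup\<close> this supremum is itself provable.\<close>

definition term_model :: "(('o,'c,'x) trm set, 'h, 'o, 'c) falg" where
  "term_model = \<lparr>carrier = prv_class ` terms Ops ar Cs X,
                 mem = (\<lambda>A. Sup {l. \<exists>t\<in>A. prv (Mem l t)}),
                 opr = (\<lambda>f As. prv_class (App f (map class_rep As))),
                 cst = (\<lambda>c. prv_class (Cst c))\<rparr>"

lemma carrier_term_model: "carrier term_model = prv_class ` terms Ops ar Cs X"
  by (simp add: term_model_def)

lemma cst_term_model: "cst term_model c = prv_class (Cst c)"
  by (simp add: term_model_def)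

lemma provable_Eqn_in_terms: "prv (Eqn s t) \<Longrightarrow> s \<in> terms Ops ar Cs X \<and> t \<in> terms Ops ar Cs X"
  using deriv_wellformed[OF thy arity] unfolding provable_def by fastforce

lemma prv_class_self: "t \<in> terms Ops ar Cs X \<Longrightarrow> t \<in> prv_class t"
  unfolding prv_class_def provable_def by (auto intro: deriv.Refl)

lemma prv_class_eq_iff:
  assumes "s \<in> terms Ops ar Cs X" and "t \<in> terms Ops ar Cs X"
  shows "prv_class s = prv_class t \<longleftrightarrow> prv (Eqn s t)"
proof
  assume "prv_class s = prv_class t"
  then have "t \<in> prv_class s" using prv_class_self[OF assms(2)] by simp
  then show "prv (Eqn s t)" by (simp add: prv_class_def)
next
  assume "prv (Eqn s t)"
  then show "prv_class s = prv_class t"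
    unfolding prv_class_def provable_def by (blast intro: deriv.Sym deriv.Trans)
qed

lemma class_rep_prv_class:
  assumes t: "t \<in> terms Ops ar Cs X"
  shows "class_rep (prv_class t) \<in> terms Ops ar Cs X"
    and "prv_class (class_rep (prv_class t)) = prv_class t"
    and "prv (Eqn t (class_rep (prv_class t)))"
proof -
  have "class_rep (prv_class t) \<in> prv_class t"
    unfolding class_rep_def using prv_class_self[OF t] by (rule someI)
  then show eq: "prv (Eqn t (class_rep (prv_class t)))" by (simp add: prv_class_def)
  then show rep: "class_rep (prv_class t) \<in> terms Ops ar Cs X"
    using provable_Eqn_in_terms by blast
  show "prv_class (class_rep (prv_class t)) = prv_class t"
    using eq prv_class_eq_iff[OF t rep] by simp
qed

lemma class_rep_in_carrier:
  assumes "A \<in> carrier term_model"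
  shows "class_rep A \<in> terms Ops ar Cs X" and "prv_class (class_rep A) = A"
  using assms class_rep_prv_class by (auto simp: carrier_term_model)

lemma mem_term_model_class:
  assumes t: "t \<in> terms Ops ar Cs X"
  shows "mem term_model (prv_class t) = Sup {l. prv (Mem l t)}"
proof -
  have "{l. \<exists>s\<in>prv_class t. prv (Mem l s)} = {l. prv (Mem l t)}"
    using prv_class_self[OF t]
    unfolding prv_class_def provable_def by (blast intro: deriv.Sym deriv.Fun)
  then show ?thesis by (simp add: term_model_def)
qed

lemma le_mem_term_model_iff:
  assumes t: "t \<in> terms Ops ar Cs X"
  shows "l \<le> mem term_model (prv_class t) \<longleftrightarrow> prv (Mem l t)"
proof
  assume "l \<le> mem term_model (prv_class t)"
  then have "inf (Sup {l. prv (Mem l t)}) l = l"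
    by (simp add: mem_term_model_class[OF t] inf_absorb2)
  moreover have "prv (Mem (Sup {l. prv (Mem l t)}) t)"
    using t unfolding provable_def by (auto intro: deriv.Sup)
  then have "prv (Mem (inf (Sup {l. prv (Mem l t)}) l) t)"
    unfolding provable_def by (rule deriv.Mon)
  ultimately show "prv (Mem l t)" by simp
qed (simp add: mem_term_model_class[OF t] Sup_upper)

lemma opr_term_model_class:
  assumes f: "f \<in> Ops" and len: "length ts = ar f" and ts: "set ts \<subseteq> terms Ops ar Cs X"
  shows "opr term_model f (map prv_class ts) = prv_class (App f ts)"
proof -
  let ?rs = "map (class_rep \<circ> prv_class) ts"
  have "\<forall>i<ar f. prv (Eqn (ts ! i) (?rs ! i))"
    using len ts class_rep_prv_class(3) by (simp add: subset_iff)
  then have "prv (Eqn (App f ts) (App f ?rs))"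
    using f len unfolding provable_def by (intro deriv.Cong) auto
  moreover have "App f ts \<in> terms Ops ar Cs X" using f len ts by (auto intro: terms.app)
  ultimately have "prv_class (App f ?rs) = prv_class (App f ts)"
    using prv_class_eq_iff provable_Eqn_in_terms by metis
  then show ?thesis by (simp add: term_model_def)
qed

lemma term_model_is_alg: "is_alg Ops ar Cs term_model"
  unfolding is_alg_def
proof (intro conjI ballI allI impI)
  fix f As assume f: "f \<in> Ops" and As: "length As = ar f \<and> set As \<subseteq> carrier term_model"
  let ?ts = "map class_rep As"
  have ts: "set ?ts \<subseteq> terms Ops ar Cs X" and As_eq: "As = map prv_class ?ts"
    using As class_rep_in_carrier by (auto intro!: map_idI[symmetric])
  have len: "length ?ts = ar f" using As by simp
  have opr: "opr term_model f As = prv_class (App f ?ts)"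
    using opr_term_model_class[OF f len ts] As_eq by simp
  have app: "App f ?ts \<in> terms Ops ar Cs X" using f len ts by (intro terms.app) auto
  then show "opr term_model f As \<in> carrier term_model" by (simp add: opr carrier_term_model)
  let ?ls = "map (\<lambda>t. Sup {l. prv (Mem l t)}) ?ts"
  have "\<forall>i<ar f. prv (Mem (?ls ! i) (?ts ! i))"
    using len ts unfolding provable_def by (auto intro!: deriv.Sup)
  then have "prv (Mem (Inf (set ?ls)) (App f ?ts))"
    using f len unfolding provable_def by (intro deriv.Exp) auto
  moreover have "mem term_model ` set As = set ?ls"
  proof -
    have "mem term_model A = Sup {l. prv (Mem l (class_rep A))}" if "A \<in> set As" for A
      using that As class_rep_in_carrier[of A] mem_term_model_class[of "class_rep A"] by auto
    then show ?thesis unfolding set_map image_image by (intro image_cong) auto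
  qed
  ultimately show "Inf (mem term_model ` set As) \<le> mem term_model (opr term_model f As)"
    using le_mem_term_model_iff[OF app] by (simp add: opr)
qed (simp add: carrier_term_model cst_term_model terms.cst)

lemma eval_term_model:
  assumes \<iota>: "\<iota> ` X \<subseteq> carrier term_model" and t: "t \<in> terms Ops ar Cs X"
  shows "eval term_model \<iota> t = prv_class (tsubst (\<lambda>x. class_rep (\<iota> x)) t)"
  using t
proof (induction rule: terms.induct)
  case (var x)
  then show ?case using \<iota> class_rep_in_carrier by auto
next
  case (app f ts)
  have "\<forall>x\<in>X. class_rep (\<iota> x) \<in> terms Ops ar Cs X" using \<iota> class_rep_in_carrier by auto
  then have "set (map (tsubst (\<lambda>x. class_rep (\<iota> x))) ts) \<subseteq> terms Ops ar Cs X"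
    using app.IH by (auto intro: tsubst_in_terms)
  moreover have "map (eval term_model \<iota>) ts = map prv_class (map (tsubst (\<lambda>x. class_rep (\<iota> x))) ts)"
    using app.IH by auto
  ultimately show ?case using opr_term_model_class[OF app.hyps(1)] app.hyps(2) by (simp del: map_map)
qed (simp add: cst_term_model)

lemma sat_term_model_iff:
  assumes \<iota>: "\<iota> ` X \<subseteq> carrier term_model" and \<phi>: "\<phi> \<in> fmls Ops ar Cs X"
  shows "sat term_model \<iota> \<phi> \<longleftrightarrow> prv (fsubst (\<lambda>x. class_rep (\<iota> x)) \<phi>)"
proof -
  have \<sigma>: "\<forall>x\<in>X. class_rep (\<iota> x) \<in> terms Ops ar Cs X" using \<iota> class_rep_in_carrier by auto
  show ?thesis
  proof (cases \<phi>)
    case (Eqn s t)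
    then show ?thesis using \<phi> eval_term_model[OF \<iota>] prv_class_eq_iff tsubst_in_terms[OF _ \<sigma>] by simp
  next
    case (Mem l t)
    then show ?thesis using \<phi> eval_term_model[OF \<iota>] le_mem_term_model_iff tsubst_in_terms[OF _ \<sigma>] by simp
  qed
qed

lemma term_model_is_model: "is_model Ops ar Cs X \<Lambda> term_model"
  unfolding is_model_def
proof (intro conjI term_model_is_alg ballI)
  fix p assume p: "p \<in> \<Lambda>"
  obtain \<Gamma> \<psi> where p_eq: "p = (\<Gamma>, \<psi>)" by fastforce
  have wf: "\<Gamma> \<subseteq> fmls Ops ar Cs X" "\<psi> \<in> fmls Ops ar Cs X"
    using thy p p_eq unfolding is_theory_def by auto
  have "sat_seq X term_model \<Gamma> \<psi>" unfolding sat_seq_def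
  proof (intro allI impI)
    fix \<iota> assume \<iota>: "\<iota> ` X \<subseteq> carrier term_model" and \<Gamma>: "\<forall>\<phi>\<in>\<Gamma>. sat term_model \<iota> \<phi>"
    let ?\<sigma> = "\<lambda>x. class_rep (\<iota> x)"
    have "\<forall>\<phi>\<in>fsubst ?\<sigma> ` \<Gamma>. ({}, \<phi>) \<in> deriv Ops ar Cs X \<Lambda>"
      using \<Gamma> wf(1) sat_term_model_iff[OF \<iota>] unfolding provable_def by blast
    moreover have "(fsubst ?\<sigma> ` \<Gamma>, fsubst ?\<sigma> \<psi>) \<in> deriv Ops ar Cs X \<Lambda>"
      using p p_eq \<iota> class_rep_in_carrier by (intro deriv.Sub deriv.Ax) auto
    ultimately have "prv (fsubst ?\<sigma> \<psi>)"
      unfolding provable_def by (intro deriv.Cut[of "{}"]) auto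
    then show "sat term_model \<iota> \<psi>" using sat_term_model_iff[OF \<iota> wf(2)] by simp
  qed
  then show "case p of (\<Gamma>, \<psi>) \<Rightarrow> sat_seq X term_model \<Gamma> \<psi>" using p_eq by simp
qed

lemma term_model_nabla_arrow: "nabla_arrow X term_model (\<lambda>x. prv_class (Var x))"
  by (auto simp: nabla_arrow_def carrier_term_model intro: terms.var)

lemma sat_term_model_Var_iff:
  assumes \<phi>: "\<phi> \<in> fmls Ops ar Cs X"
  shows "sat term_model (\<lambda>x. prv_class (Var x)) \<phi> \<longleftrightarrow> prv \<phi>"
proof -
  have "eval term_model (\<lambda>x. prv_class (Var x)) t = prv_class t" if "t \<in> terms Ops ar Cs X" for t
    using that
  proof (induction rule: terms.induct)
    case (app f ts)
    then show ?case using opr_term_model_class[of f ts] by (simp add: subset_iff cong: map_cong)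
  qed (simp_all add: cst_term_model)
  then show ?thesis using \<phi> prv_class_eq_iff le_mem_term_model_iff by (cases \<phi>) auto
qed

end

theorem lemma37:
  fixes Ops :: "'o set" and ar :: "'o \<Rightarrow> nat" and Cs :: "'c set" and X :: "'x set"
    and \<Lambda> :: "(('o,'c,'x,'h::complete_lattice) fml set \<times> ('o,'c,'x,'h) fml) set"
    and F :: "('a,'h,'o,'c) falg" and \<eta> :: "'x \<Rightarrow> 'a"
  assumes frame: "is_frame TYPE('h)"
    and arity: "\<forall>f\<in>Ops. 0 < ar f"
    and thy: "is_theory Ops ar Cs X \<Lambda>"
    and univ_own: "universal_arrow Ops ar Cs X \<Lambda> F \<eta> TYPE('a)"
    and univ_big: "universal_arrow Ops ar Cs X \<Lambda> F \<eta> TYPE(('o,'c,'x) trm set)"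
  shows "\<forall>\<phi>\<in>fmls Ops ar Cs X. sat F \<eta> \<phi> \<longleftrightarrow> provable Ops ar Cs X \<Lambda> \<phi>"
proof
  fix \<phi> :: "('o,'c,'x,'h) fml" assume \<phi>: "\<phi> \<in> fmls Ops ar Cs X"
  have model: "is_model Ops ar Cs X \<Lambda> F" and \<eta>: "\<eta> ` X \<subseteq> carrier F"
    using univ_big unfolding universal_arrow_def nabla_arrow_def by auto
  obtain h where hom: "alg_hom Ops ar Cs F (term_model Ops ar Cs X \<Lambda>) h"
    and h\<eta>: "\<forall>x\<in>X. h (\<eta> x) = prv_class Ops ar Cs X \<Lambda> (Var x)"
    using univ_big term_model_is_model[OF thy arity] term_model_nabla_arrow[OF thy arity]
    unfolding universal_arrow_def by blast
  show "sat F \<eta> \<phi> \<longleftrightarrow> provable Ops ar Cs X \<Lambda> \<phi>"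
  proof
    assume "sat F \<eta> \<phi>"
    then have "sat (term_model Ops ar Cs X \<Lambda>) (\<lambda>x. prv_class Ops ar Cs X \<Lambda> (Var x)) \<phi>"
      using alg_hom_preserves_sat[OF hom _ \<eta> h\<eta> \<phi>] model by (simp add: is_model_def)
    then show "provable Ops ar Cs X \<Lambda> \<phi>" using sat_term_model_Var_iff[OF thy arity \<phi>] by simp
  next
    assume "provable Ops ar Cs X \<Lambda> \<phi>"
    then have "sat_seq X F {} \<phi>" unfolding provable_def by (rule deriv_sound[OF thy arity model])
    then show "sat F \<eta> \<phi>" using \<eta> by (simp add: sat_seq_def)
  qed
qed

end
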